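(* Let $H$ be a real Hilbert space, $f:H\to\mathbb{R}\cup\{+\infty\}$ a proper lower semicontinuous function, $\bar x\in\operatorname{dom}f$, $p\in\partial_pf(\bar x)$, and $A\subset H$ a nonempty compact set. The following are equivalent: (i) there exists $\beta>0$ such that $f''_-(\bar x,p,h)\ge\beta$ holds uniformly with respect to $h\in A$; (ii) there exists $\beta>0$ such that $f''_-(\bar x,p,h)\ge\beta$ for all $h\in A$; (iii) $f''_-(\bar x,p,h)>0$ for all $h\in A$.
   Context: $B_H$ is the closed unit ball of $H$. Proximal subdifferential: $\zeta\in\partial_p f(x)$ iff there exist $\sigma,\delta>0$ with $f(y)\ge f(x)+\langle\zeta,y-x\rangle-\frac{\sigma}{2}\|y-x\|^2$ whenever $\|y-x\|<\delta$. $\Delta_2 f(\bar x,p,t,u):=\frac{f(\bar x+tu)-f(\bar x)-t\langle p,u\rangle}{\frac12t^2}$ for $t>0$, and $f''_-(\bar x,p,h):=\liminf_{h'\to h,\,t\downarrow0}\Delta_2f(\bar x,p,t,h')$. Definition: for $\beta>0$ and nonempty $A\subset H$, "$f''_-(\bar x,p,h)\ge\beta$ holds uniformly with respect to $h\in A$" means that for every $\varepsilon>0$ there exists $\delta>0$ such that $\Delta_2f(\bar x,p,t,h)\ge\beta-\varepsilon$ for all $t\in(0,\delta)$ and all $h\in A+\delta B_H$. *)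

theory Defs
  imports "HOL-Analysis.Analysis"
begin

definition proper_fun :: "('a \<Rightarrow> ereal) \<Rightarrow> bool" where
  "proper_fun f \<longleftrightarrow> (\<forall>x. f x \<noteq> -\<infinity>) \<and> (\<exists>x. f x \<noteq> \<infinity>)"

definition lsc_fun :: "('a::topological_space \<Rightarrow> ereal) \<Rightarrow> bool" where
  "lsc_fun f \<longleftrightarrow> (\<forall>x. f x \<le> Liminf (at x) f)"

definition dom_fun :: "('a \<Rightarrow> ereal) \<Rightarrow> 'a set" where
  "dom_fun f = {x. f x < \<infinity>}"

definition prox_subdiff :: "('a::real_inner \<Rightarrow> ereal) \<Rightarrow> 'a \<Rightarrow> 'a set" where
  "prox_subdiff f x = {\<zeta>. \<exists>\<sigma>>0. \<exists>\<delta>>0. \<forall>y. norm (y - x) < \<delta> \<longrightarrow>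
      f y \<ge> f x + ereal (inner \<zeta> (y - x) - \<sigma> / 2 * (norm (y - x))\<^sup>2)}"

definition Delta2 :: "('a::real_inner \<Rightarrow> ereal) \<Rightarrow> 'a \<Rightarrow> 'a \<Rightarrow> real \<Rightarrow> 'a \<Rightarrow> ereal" where
  "Delta2 f xb p t u = (f (xb + t *\<^sub>R u) - f xb - ereal (t * inner p u)) / ereal (t\<^sup>2 / 2)"

definition lower_sod :: "('a::real_inner \<Rightarrow> ereal) \<Rightarrow> 'a \<Rightarrow> 'a \<Rightarrow> 'a \<Rightarrow> ereal" where
  "lower_sod f xb p h = Liminf (nhds h \<times>\<^sub>F at_right 0) (\<lambda>(h', t). Delta2 f xb p t h')"

definition unif_sod_ge :: "('a::real_inner \<Rightarrow> ereal) \<Rightarrow> 'a \<Rightarrow> 'a \<Rightarrow> real \<Rightarrow> 'a set \<Rightarrow> bool" where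
  "unif_sod_ge f xb p \<beta> A \<longleftrightarrow> (\<forall>\<epsilon>>0. \<exists>\<delta>>0. \<forall>t\<in>{0<..<\<delta>}. \<forall>h.
      (\<exists>a\<in>A. norm (h - a) \<le> \<delta>) \<longrightarrow> Delta2 f xb p t h \<ge> ereal (\<beta> - \<epsilon>))"

end

theory Submission
  imports Defs
begin

text \<open>Only the compactness of A matters.
  A strictly positive lower epi-derivative at h gives a positive lower bound for the difference
  quotients on a neighbourhood of (h, 0+); a finite subcover of A by such neighbourhoods
  yields a common bound \<beta> > 0 on a uniform neighbourhood of A, i.e. (iii) implies (i).
  Conversely a uniform bound passes to the liminf, and (ii) trivially implies (iii).\<close>

lemma eventually_nhds_times_at_right_0_iff:
  fixes h :: "'a::metric_space"
  shows "(\<forall>\<^sub>F (h', t) in nhds h \<times>\<^sub>F at_right (0::real). P h' t) \<longleftrightarrow>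
    (\<exists>r>0. \<forall>h' t. dist h' h < r \<longrightarrow> t \<in> {0<..<r} \<longrightarrow> P h' t)"
proof
  assume "\<forall>\<^sub>F (h', t) in nhds h \<times>\<^sub>F at_right 0. P h' t"
  then obtain Pf Pg where P: "eventually Pf (nhds h)" "eventually Pg (at_right (0::real))"
    and Pfg: "\<And>h' t. Pf h' \<Longrightarrow> Pg t \<Longrightarrow> P h' t"
    unfolding eventually_prod_filter by auto
  obtain r where r: "r > 0" "\<And>h'. dist h' h < r \<Longrightarrow> Pf h'"
    using P(1) unfolding eventually_nhds_metric by blast
  obtain d where d: "d > 0" "\<And>t. 0 < t \<Longrightarrow> t < d \<Longrightarrow> Pg t"
    using P(2) unfolding eventually_at_right_field by auto
  show "\<exists>r>0. \<forall>h' t. dist h' h < r \<longrightarrow> t \<in> {0<..<r} \<longrightarrow> P h' t"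
    using r d Pfg by (intro exI[of _ "min r d"]) auto
next
  assume "\<exists>r>0. \<forall>h' t. dist h' h < r \<longrightarrow> t \<in> {0<..<r} \<longrightarrow> P h' t"
  then obtain r where "r > 0" and r: "\<And>h' t. dist h' h < r \<Longrightarrow> t \<in> {0<..<r} \<Longrightarrow> P h' t"
    by blast
  have "eventually (\<lambda>h'. dist h' h < r) (nhds h)"
    using \<open>r > 0\<close> unfolding eventually_nhds_metric by blast
  moreover have "eventually (\<lambda>t. t \<in> {0<..<r}) (at_right (0::real))"
    using \<open>r > 0\<close> by (rule eventually_at_right_real)
  ultimately show "\<forall>\<^sub>F (h', t) in nhds h \<times>\<^sub>F at_right 0. P h' t"
    unfolding eventually_prod_filter using r by (intro exI conjI) (auto simp only: case_prod_conv)
qed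

lemma unif_sod_ge_imp_lower_sod_ge:
  assumes "unif_sod_ge f xb p \<beta> A" and "h \<in> A"
  shows "ereal \<beta> \<le> lower_sod f xb p h"
proof (rule ereal_le_epsilon2)
  fix \<epsilon> :: real assume "\<epsilon> > 0"
  then obtain \<delta> where "\<delta> > 0" and \<delta>: "\<forall>t\<in>{0<..<\<delta>}. \<forall>h'.
      (\<exists>a\<in>A. norm (h' - a) \<le> \<delta>) \<longrightarrow> ereal (\<beta> - \<epsilon>) \<le> Delta2 f xb p t h'"
    using assms(1) unfolding unif_sod_ge_def by blast
  have "\<forall>\<^sub>F (h', t) in nhds h \<times>\<^sub>F at_right 0. ereal (\<beta> - \<epsilon>) \<le> Delta2 f xb p t h'"
    unfolding eventually_nhds_times_at_right_0_iff
    using \<open>\<delta> > 0\<close> \<delta> assms(2) by (intro exI[of _ \<delta>]) (force simp: dist_norm)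
  then have "ereal (\<beta> - \<epsilon>) \<le> lower_sod f xb p h"
    unfolding lower_sod_def by (intro Liminf_bounded) (simp add: case_prod_unfold)
  then have "ereal (\<beta> - \<epsilon>) + ereal \<epsilon> \<le> lower_sod f xb p h + ereal \<epsilon>"
    by (rule add_right_mono)
  then show "ereal \<beta> \<le> lower_sod f xb p h + ereal \<epsilon>"
    by simp
qed

lemma lower_sod_gt_imp_local_bound:
  assumes "ereal c < lower_sod f xb p h"
  shows "\<exists>r>0. \<forall>h' t. dist h' h < r \<longrightarrow> t \<in> {0<..<r} \<longrightarrow> ereal c < Delta2 f xb p t h'"
  using less_LiminfD[OF assms[unfolded lower_sod_def]]
  unfolding eventually_nhds_times_at_right_0_iff[symmetric] by (simp add: case_prod_unfold)

lemma compact_local_bounds_imp_uniform_bound: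
  fixes g :: "'a::metric_space \<Rightarrow> real \<Rightarrow> ereal"
  assumes "compact A"
    and local: "\<forall>h\<in>A. \<exists>c>0. \<exists>r>0. \<forall>h' t. dist h' h < r \<longrightarrow> t \<in> {0<..<r} \<longrightarrow> ereal c < g h' t"
  shows "\<exists>c>0. \<exists>\<delta>>0. \<forall>a\<in>A. \<forall>h t. dist h a \<le> \<delta> \<longrightarrow> t \<in> {0<..<\<delta>} \<longrightarrow> ereal c < g h t"
proof -
  obtain c where c: "\<forall>h\<in>A. c h > 0 \<and> (\<exists>r>0.
      \<forall>h' t. dist h' h < r \<longrightarrow> t \<in> {0<..<r} \<longrightarrow> ereal (c h) < g h' t)"
    using bchoice[OF local] by blast
  then have "\<forall>h\<in>A. \<exists>r>0. \<forall>h' t. dist h' h < r \<longrightarrow> t \<in> {0<..<r} \<longrightarrow> ereal (c h) < g h' t"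
    by blast
  from bchoice[OF this] obtain r where r: "\<forall>h\<in>A. r h > 0 \<and>
      (\<forall>h' t. dist h' h < r h \<longrightarrow> t \<in> {0<..<r h} \<longrightarrow> ereal (c h) < g h' t)"
    by blast
  \<comment> \<open>Halved radii, so that a \<delta>-neighbourhood of A stays inside the full-radius balls.\<close>
  have cover: "A \<subseteq> (\<Union>h\<in>A. ball h (r h / 2))"
  proof
    fix h assume "h \<in> A"
    then have "h \<in> ball h (r h / 2)"
      using r by simp
    then show "h \<in> (\<Union>h\<in>A. ball h (r h / 2))"
      using \<open>h \<in> A\<close> by blast
  qed
  then obtain T where T: "T \<subseteq> A" "finite T" "A \<subseteq> (\<Union>h\<in>T. ball h (r h / 2))"
    using compactE_image[OF \<open>compact A\<close> _ cover] by blast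
  define c0 where "c0 = Min (insert 1 (c ` T))"
  define \<delta> where "\<delta> = Min (insert 1 ((\<lambda>h. r h / 2) ` T))"
  have "c0 > 0" "\<delta> > 0"
    unfolding c0_def \<delta>_def using T c r by (auto simp: Min_gr_iff)
  moreover have "ereal c0 < g h t" if "a \<in> A" "dist h a \<le> \<delta>" "t \<in> {0<..<\<delta>}" for a h t
  proof -
    obtain k where k: "k \<in> T" "dist k a < r k / 2"
      using T(3) \<open>a \<in> A\<close> by auto
    have "\<delta> \<le> r k / 2"
      unfolding \<delta>_def using T k by (intro Min_le) auto
    have "c0 \<le> c k"
      unfolding c0_def using T k by (intro Min_le) auto
    have "dist h k \<le> dist h a + dist k a"
      by (rule dist_triangle2)
    then have "dist h k < r k" and "t \<in> {0<..<r k}"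
      using that k \<open>\<delta> \<le> r k / 2\<close> by auto
    then have "ereal (c k) < g h t"
      using r T k by blast
    then show ?thesis
      using \<open>c0 \<le> c k\<close> by (meson ereal_less_eq(3) order_le_less_trans)
  qed
  ultimately show ?thesis
    by blast
qed

lemma lower_sod_pos_imp_unif_sod_ge:
  assumes "compact A" and pos: "\<forall>h\<in>A. 0 < lower_sod f xb p h"
  shows "\<exists>\<beta>>0. unif_sod_ge f xb p \<beta> A"
proof -
  have "\<forall>h\<in>A. \<exists>c>0. \<exists>r>0. \<forall>h' t. dist h' h < r \<longrightarrow> t \<in> {0<..<r} \<longrightarrow> ereal c < Delta2 f xb p t h'"
  proof
    fix h assume "h \<in> A"
    then obtain c where "0 < ereal c" and c: "ereal c < lower_sod f xb p h"
      using pos ereal_dense2 by blast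
    then show "\<exists>c>0. \<exists>r>0. \<forall>h' t. dist h' h < r \<longrightarrow> t \<in> {0<..<r} \<longrightarrow> ereal c < Delta2 f xb p t h'"
      using lower_sod_gt_imp_local_bound[OF c] by auto
  qed
  from compact_local_bounds_imp_uniform_bound[OF \<open>compact A\<close> this]
  obtain \<beta> \<delta> where "\<beta> > 0" "\<delta> > 0"
    and \<beta>: "\<forall>a\<in>A. \<forall>h t. dist h a \<le> \<delta> \<longrightarrow> t \<in> {0<..<\<delta>} \<longrightarrow> ereal \<beta> < Delta2 f xb p t h"
    by blast
  have "unif_sod_ge f xb p \<beta> A"
    unfolding unif_sod_ge_def
  proof (intro allI impI exI[of _ \<delta>] conjI ballI)
    fix \<epsilon> :: real and t h
    assume "\<epsilon> > 0" "t \<in> {0<..<\<delta>}" "\<exists>a\<in>A. norm (h - a) \<le> \<delta>"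
    then have "ereal \<beta> < Delta2 f xb p t h"
      using \<beta> by (auto simp: dist_norm)
    then show "ereal (\<beta> - \<epsilon>) \<le> Delta2 f xb p t h"
      using \<open>\<epsilon> > 0\<close> by (meson diff_le_eq ereal_less_eq(3) less_add_same_cancel1 less_imp_le order_trans)
  qed (rule \<open>\<delta> > 0\<close>)
  then show ?thesis
    using \<open>\<beta> > 0\<close> by blast
qed

theorem proposition5p1:
  fixes f :: "'a::{real_inner, complete_space} \<Rightarrow> ereal"
    and xb p :: 'a and A :: "'a set"
  assumes "proper_fun f" and "lsc_fun f"
    and "xb \<in> dom_fun f"
    and "p \<in> prox_subdiff f xb"
    and "A \<noteq> {}" and "compact A"
  shows "((\<exists>\<beta>>0. unif_sod_ge f xb p \<beta> A) \<longleftrightarrow> (\<exists>\<beta>>0. \<forall>h\<in>A. lower_sod f xb p h \<ge> ereal \<beta>))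
       \<and> ((\<exists>\<beta>>0. \<forall>h\<in>A. lower_sod f xb p h \<ge> ereal \<beta>) \<longleftrightarrow> (\<forall>h\<in>A. lower_sod f xb p h > 0))"
proof -
  have "(\<exists>\<beta>>0. unif_sod_ge f xb p \<beta> A) \<Longrightarrow> (\<exists>\<beta>>0. \<forall>h\<in>A. lower_sod f xb p h \<ge> ereal \<beta>)"
    using unif_sod_ge_imp_lower_sod_ge by blast
  moreover have "(\<exists>\<beta>>0. \<forall>h\<in>A. lower_sod f xb p h \<ge> ereal \<beta>) \<Longrightarrow> (\<forall>h\<in>A. lower_sod f xb p h > 0)"
    by (metis ereal_less(2) order_less_le_trans)
  moreover have "(\<forall>h\<in>A. lower_sod f xb p h > 0) \<Longrightarrow> (\<exists>\<beta>>0. unif_sod_ge f xb p \<beta> A)"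
    using lower_sod_pos_imp_unif_sod_ge \<open>compact A\<close> by blast
  ultimately show ?thesis
    by blast
qed

end
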